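(* Let $p,q$ be positive integers and let $T_1$ be the least period of the Cat map over $\mathbb{Z}_2$. Then $G_{T_1}$ is even and $$\tfrac12 G_{T_1}-1=\begin{cases}\frac12 pq(pq+3)^2 & \text{if } p \text{ and } q \text{ are odd};\\ pq\left(\frac12 pq+2\right) & \text{if exactly one of } p,q \text{ is odd};\\ \frac12 pq & \text{if } p \text{ and } q \text{ are even}.\end{cases}$$
   Context: $\mathbf{C}=\begin{bmatrix}1 & p\\ q & 1+pq\end{bmatrix}$; the Cat map over $\mathbb{Z}_N$ is $v\mapsto\mathbf{C}v\bmod N$ on $\mathbb{Z}_N^2$, and its least period is the least $n\ge1$ with $\mathbf{C}^nv\equiv v\pmod N$ for all $v$. $A=pq+2$, $B=\sqrt{A^2-4}$, $G_n=\left(\frac{A+B}{2}\right)^n+\left(\frac{A-B}{2}\right)^n$. *)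

theory Defs
  imports Complex_Main
begin

definition cat_mat :: "int \<Rightarrow> int \<Rightarrow> int \<times> int \<Rightarrow> int \<times> int" where
  "cat_mat p q v = (fst v + p * snd v, q * fst v + (1 + p * q) * snd v)"

text \<open>Least period of the Cat map over Z_N: least n \<ge> 1 with C^n v = v (mod N) for all v.
  Vectors of Z_N^2 are represented by integer pairs, taken modulo N.\<close>
definition cat_period :: "int \<Rightarrow> int \<Rightarrow> int \<Rightarrow> nat" where
  "cat_period p q N = (LEAST n. n \<ge> 1 \<and>
     (\<forall>v. fst ((cat_mat p q ^^ n) v) mod N = fst v mod N \<and>
          snd ((cat_mat p q ^^ n) v) mod N = snd v mod N))"

definition catA :: "int \<Rightarrow> int \<Rightarrow> real" where
  "catA p q = real_of_int (p * q + 2)"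

definition catB :: "int \<Rightarrow> int \<Rightarrow> real" where
  "catB p q = sqrt ((catA p q)\<^sup>2 - 4)"

definition catG :: "int \<Rightarrow> int \<Rightarrow> nat \<Rightarrow> real" where
  "catG p q n = ((catA p q + catB p q) / 2) ^ n + ((catA p q - catB p q) / 2) ^ n"

end

theory Submission imports Defs begin

text \<open>Modulo 2 the Cat matrix depends only on the parities of \<open>p\<close> and \<open>q\<close>: it is the identity
  when both are even, has order 2 when exactly one is odd and order 3 when both are odd, so
  \<open>T\<^sub>1 \<in> {1, 2, 3}\<close>. Since \<open>(A \<plusminus> B)/2\<close> are the roots of \<open>x\<^sup>2 - A x + 1\<close>, the sequence \<open>G\<^sub>n\<close>
  satisfies \<open>G\<^sub>n\<^sub>+\<^sub>2 = A G\<^sub>n\<^sub>+\<^sub>1 - G\<^sub>n\<close> with \<open>G\<^sub>0 = 2\<close> and \<open>G\<^sub>1 = A = pq + 2\<close>, whence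
  \<open>G\<^sub>2 = pq(pq + 4) + 2\<close> and \<open>G\<^sub>3 = pq(pq + 3)\<^sup>2 + 2\<close>.\<close>

definition cat_fixes_mod :: "int \<Rightarrow> int \<Rightarrow> int \<Rightarrow> nat \<Rightarrow> bool" where
  "cat_fixes_mod p q N n \<longleftrightarrow> (\<forall>v. fst ((cat_mat p q ^^ n) v) mod N = fst v mod N \<and>
                                   snd ((cat_mat p q ^^ n) v) mod N = snd v mod N)"

lemma cat_period_eqI:
  assumes "n \<ge> 1" and "cat_fixes_mod p q N n"
    and "\<And>m. 1 \<le> m \<Longrightarrow> m < n \<Longrightarrow> \<not> cat_fixes_mod p q N m"
  shows "cat_period p q N = n"
  unfolding cat_period_def cat_fixes_mod_def[symmetric]
  by (rule Least_equality) (use assms not_less in blast)+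

lemma cat_fixes_mod_2_iff:
  "cat_fixes_mod p q 2 n \<longleftrightarrow>
     (\<forall>x y. (even (fst ((cat_mat p q ^^ n) (x, y))) \<longleftrightarrow> even x) \<and>
            (even (snd ((cat_mat p q ^^ n) (x, y))) \<longleftrightarrow> even y))"
proof -
  have "a mod 2 = b mod 2 \<longleftrightarrow> (even a \<longleftrightarrow> even b)" for a b :: int
    by (metis even_iff_mod_2_eq_zero odd_iff_mod_2_eq_one)
  then show ?thesis
    unfolding cat_fixes_mod_def by simp
qed

lemma cat_period_mod_2_even_even:
  assumes "even p" "even q"
  shows "cat_period p q 2 = 1"
  by (rule cat_period_eqI) (use assms in \<open>auto simp: cat_fixes_mod_2_iff cat_mat_def\<close>)

lemma cat_period_mod_2_odd_even:
  assumes "odd p \<noteq> odd q"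
  shows "cat_period p q 2 = 2"
proof (rule cat_period_eqI)
  show "cat_fixes_mod p q 2 2"
    using assms by (auto simp: cat_fixes_mod_2_iff cat_mat_def numeral_2_eq_2)
next
  fix m :: nat assume "1 \<le> m" "m < 2"
  then have "m = 1" by simp
  moreover have "odd (fst (cat_mat p q (0, 1))) \<or> odd (snd (cat_mat p q (1, 0)))"
    using assms by (auto simp: cat_mat_def)
  ultimately show "\<not> cat_fixes_mod p q 2 m"
    unfolding cat_fixes_mod_2_iff by fastforce
qed simp

lemma cat_period_mod_2_odd_odd:
  assumes "odd p" "odd q"
  shows "cat_period p q 2 = 3"
proof (rule cat_period_eqI)
  show "cat_fixes_mod p q 2 3"
    using assms by (auto simp: cat_fixes_mod_2_iff cat_mat_def numeral_3_eq_3)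
next
  fix m :: nat assume "1 \<le> m" "m < 3"
  then have "m = 1 \<or> m = 2" by auto
  moreover have "odd (fst (cat_mat p q (0, 1)))" "odd (fst (cat_mat p q (cat_mat p q (0, 1))))"
    using assms by (auto simp: cat_mat_def)
  ultimately show "\<not> cat_fixes_mod p q 2 m"
    unfolding cat_fixes_mod_2_iff by (fastforce simp: numeral_2_eq_2)
qed simp

lemma power_sum_recurrence:
  fixes x y :: "'a :: comm_ring_1"
  shows "x ^ Suc (Suc n) + y ^ Suc (Suc n) = (x + y) * (x ^ Suc n + y ^ Suc n) - x * y * (x ^ n + y ^ n)"
  by (simp add: algebra_simps)

lemma catB_squared:
  assumes "p * q \<ge> 0"
  shows "(catB p q)\<^sup>2 = (catA p q)\<^sup>2 - 4"
proof -
  have "catA p q \<ge> 2"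
    using assms unfolding catA_def by linarith
  then have "(catA p q)\<^sup>2 \<ge> 2\<^sup>2"
    by (rule power_mono) simp
  then show ?thesis
    by (simp add: catB_def)
qed

lemma catG_0: "catG p q 0 = 2"
  by (simp add: catG_def)

lemma catG_1: "catG p q 1 = catA p q"
  by (simp add: catG_def field_simps)

lemma catG_Suc_Suc:
  assumes "p * q \<ge> 0"
  shows "catG p q (Suc (Suc n)) = catA p q * catG p q (Suc n) - catG p q n"
proof -
  define r s where "r = (catA p q + catB p q) / 2" and "s = (catA p q - catB p q) / 2"
  have "r * s = ((catA p q)\<^sup>2 - (catB p q)\<^sup>2) / 4"
    by (simp add: r_def s_def power2_eq_square field_simps)
  also have "\<dots> = 1"
    using catB_squared[OF assms] by simp
  finally have "r * s = 1" .
  moreover have "r + s = catA p q"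
    by (simp add: r_def s_def field_simps)
  ultimately show ?thesis
    unfolding catG_def r_def[symmetric] s_def[symmetric] power_sum_recurrence by simp
qed

lemma catG_2:
  assumes "p * q \<ge> 0"
  shows "catG p q 2 = of_int (p * q * (p * q + 4) + 2)"
proof -
  have "catG p q 2 = catA p q * catA p q - 2"
    using catG_Suc_Suc[OF assms, of 0] catG_0[of p q] catG_1[of p q] by (simp add: numeral_2_eq_2)
  then show ?thesis
    by (simp add: catA_def algebra_simps)
qed

lemma catG_3:
  assumes "p * q \<ge> 0"
  shows "catG p q 3 = of_int (p * q * (p * q + 3)\<^sup>2 + 2)"
proof -
  have "catG p q 3 = catA p q * catG p q 2 - catA p q"
    using catG_Suc_Suc[OF assms, of 1] catG_1[of p q] by (simp add: numeral_3_eq_3 numeral_2_eq_2)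
  with assms show ?thesis
    by (simp add: catG_2 catA_def algebra_simps power2_eq_square)
qed

lemma even_plus_two_halved:
  assumes "x = real_of_int (m + 2)" and "even m"
  shows "(\<exists>k::int. x = real_of_int (2 * k)) \<and> x / 2 - 1 = real_of_int m / 2"
proof
  from \<open>even m\<close> obtain j where "m = 2 * j" ..
  with assms(1) show "\<exists>k::int. x = real_of_int (2 * k)"
    by (intro exI[of _ "j + 1"]) simp
  show "x / 2 - 1 = real_of_int m / 2"
    using assms(1) by (simp add: field_simps)
qed

theorem proposition4:
  fixes p q :: int
  assumes "p > 0" and "q > 0"
  defines "T1 \<equiv> cat_period p q 2"
  shows "(\<exists>k::int. catG p q T1 = real_of_int (2 * k)) \<and>
         catG p q T1 / 2 - 1 =
           (if odd p \<and> odd q then real_of_int (p * q) * (real_of_int (p * q) + 3)\<^sup>2 / 2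
            else if odd p \<noteq> odd q then real_of_int (p * q) * (real_of_int (p * q) / 2 + 2)
            else real_of_int (p * q) / 2)"
proof -
  have pq: "p * q \<ge> 0"
    using assms by simp
  define m where "m = (if odd p \<and> odd q then p * q * (p * q + 3)\<^sup>2
                       else if odd p \<noteq> odd q then p * q * (p * q + 4) else p * q)"
  have "catG p q T1 = of_int (m + 2)"
    using cat_period_mod_2_odd_odd cat_period_mod_2_odd_even cat_period_mod_2_even_even
      catG_3[OF pq] catG_2[OF pq] catG_1[of p q]
    by (auto simp: T1_def m_def catA_def)
  moreover have "even m"
    by (auto simp: m_def)
  ultimately have "(\<exists>k::int. catG p q T1 = real_of_int (2 * k)) \<and> catG p q T1 / 2 - 1 = of_int m / 2"
    by (rule even_plus_two_halved)
  moreover have "real_of_int m / 2 =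
           (if odd p \<and> odd q then real_of_int (p * q) * (real_of_int (p * q) + 3)\<^sup>2 / 2
            else if odd p \<noteq> odd q then real_of_int (p * q) * (real_of_int (p * q) / 2 + 2)
            else real_of_int (p * q) / 2)"
    by (simp add: m_def field_simps)
  ultimately show ?thesis
    by simp
qed

end
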